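(* For every homogeneous polynomial $f(\mathbf{x}) \in \mathbb{C}[x_1,\ldots,x_n]$, we have $\mathrm{commRO}(f) \leq \mathrm{DPD}(f)$.
   Context: For $f \in \mathbb{C}[x_1,\ldots,x_n]$, the dimension of partial derivatives is $\mathrm{DPD}(f) := \dim_{\mathbb{C}} \mathrm{span}_{\mathbb{C}}\{\partial_{\mathbf{e}} f : \mathbf{e} \in \mathbb{N}^n\}$, where $\partial_{\mathbf{e}} f$ is the partial derivative of $f$ with respect to the monomial $x_1^{e_1}\cdots x_n^{e_n}$ (so $\mathbf{e}=\mathbf{0}$ gives $f$ itself). A read-once oblivious ABP (ROABP) of width $w$ computing an $n$-variate polynomial $f$ of individual degree at most $d$ consists of a permutation $\sigma$ of $[n]$, matrices $A_{j,k} \in \mathbb{C}^{w\times w}$ for $j\in[n]$, $0\le k\le d$, and vectors $\mathbf{u},\mathbf{v}\in\mathbb{C}^w$ such that $f(\mathbf{x}) = \mathbf{u}^{T} M_{\sigma(1)}(x_{\sigma(1)}) \cdots M_{\sigma(n)}(x_{\sigma(n)}) \mathbf{v}$, where $M_j(x_j) = \sum_{k=0}^{d} A_{j,k} x_j^k$. The $A_{j,k}$ are its coefficient matrices. A commutative ROABP is an ROABP whose coefficient matrices all pairwise commute. $\mathrm{commRO}(f)$ denotes the smallest $w$ such that some width-$w$ commutative ROABP computes $f$. *)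

theory Defs
  imports Complex_Main "HOL-Library.Function_Algebras" "Jordan_Normal_Form.Matrix"
begin

text \<open>A polynomial in the variables x_0, ..., x_(n-1) over the complex numbers is represented
  by its coefficient function: it maps an exponent vector e (a function nat to nat, giving the
  exponent of variable i as e i) to the coefficient of the monomial with exponents e.\<close>

type_synonym cpoly = "(nat \<Rightarrow> nat) \<Rightarrow> complex"

definition is_poly :: "nat \<Rightarrow> cpoly \<Rightarrow> bool" where
  "is_poly n f \<longleftrightarrow> finite {e. f e \<noteq> 0} \<and> (\<forall>e. f e \<noteq> 0 \<longrightarrow> (\<forall>i\<ge>n. e i = 0))"

definition homogeneous :: "nat \<Rightarrow> cpoly \<Rightarrow> bool" where
  "homogeneous n f \<longleftrightarrow> (\<exists>D. \<forall>e. f e \<noteq> 0 \<longrightarrow> (\<Sum>i<n. e i) = D)"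

definition poly_eval :: "nat \<Rightarrow> cpoly \<Rightarrow> (nat \<Rightarrow> complex) \<Rightarrow> complex" where
  "poly_eval n f x = (\<Sum>e\<in>{e. f e \<noteq> 0}. f e * (\<Prod>i<n. x i ^ e i))"

definition pderiv_mono :: "nat \<Rightarrow> (nat \<Rightarrow> nat) \<Rightarrow> cpoly \<Rightarrow> cpoly" where
  "pderiv_mono n e f = (\<lambda>m. (\<Prod>i<n. of_nat (fact (m i + e i)) / of_nat (fact (m i)))
                            * f (\<lambda>i. m i + e i))"

definition poly_scale :: "complex \<Rightarrow> cpoly \<Rightarrow> cpoly" where
  "poly_scale c f = (\<lambda>m. c * f m)"

definition DPD :: "nat \<Rightarrow> cpoly \<Rightarrow> nat" where
  "DPD n f = vector_space.dim poly_scale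
     {pderiv_mono n e f | e. \<forall>i\<ge>n. e i = 0}"

text \<open>A width-w ROABP with variable order sigma (a permutation of {0..<n}), coefficient
  matrices A j k (j < n, k \<le> d), and vectors u, v.\<close>
definition roabp_matrix :: "nat \<Rightarrow> nat \<Rightarrow> (nat \<Rightarrow> nat \<Rightarrow> complex mat) \<Rightarrow> nat \<Rightarrow> complex \<Rightarrow> complex mat" where
  "roabp_matrix w d A j t = mat w w (\<lambda>(r, c). \<Sum>k\<le>d. (A j k $$ (r, c)) * t ^ k)"

definition roabp_eval :: "nat \<Rightarrow> nat \<Rightarrow> nat \<Rightarrow> (nat \<Rightarrow> nat) \<Rightarrow> (nat \<Rightarrow> nat \<Rightarrow> complex mat)
     \<Rightarrow> complex vec \<Rightarrow> complex vec \<Rightarrow> (nat \<Rightarrow> complex) \<Rightarrow> complex" where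
  "roabp_eval n w d \<sigma> A u v x =
     u \<bullet> (foldr (*) (map (\<lambda>i. roabp_matrix w d A (\<sigma> i) (x (\<sigma> i))) [0..<n]) (1\<^sub>m w) *\<^sub>v v)"

definition comm_roabp_computes :: "nat \<Rightarrow> nat \<Rightarrow> cpoly \<Rightarrow> bool" where
  "comm_roabp_computes n w f \<longleftrightarrow>
     (\<exists>d \<sigma> A u v.
        bij_betw \<sigma> {..<n} {..<n} \<and>
        (\<forall>j k. j < n \<and> k \<le> d \<longrightarrow> A j k \<in> carrier_mat w w) \<and>
        u \<in> carrier_vec w \<and> v \<in> carrier_vec w \<and>
        (\<forall>j1 k1 j2 k2. j1 < n \<and> k1 \<le> d \<and> j2 < n \<and> k2 \<le> d \<longrightarrow>
            A j1 k1 * A j2 k2 = A j2 k2 * A j1 k1) \<and>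
        (\<forall>x. roabp_eval n w d \<sigma> A u v x = poly_eval n f x))"

definition commRO :: "nat \<Rightarrow> cpoly \<Rightarrow> nat" where
  "commRO n f = (LEAST w. comm_roabp_computes n w f)"

end

theory Submission
  imports Defs
begin

(* By Taylor's formula f(x) = [S_1(x_1) ... S_n(x_n) f](0), where S_j(t) = sum_k t^k D_j^(k)
   shifts x_j by t and D_j^(k) = (1/k!) d^k/dx_j^k is a Hasse derivative. The D_j^(k) pairwise
   commute and map the span V of the partial derivatives of f into itself, so in a basis of V
   they are commuting dim V x dim V matrices. With v the coordinate vector of f and u the row of
   the functional g -> g(0) this is a commutative ROABP of width DPD(f). *)

lemma foldr_closed:
  "(\<And>i. i \<in> set is \<Longrightarrow> L i ` S \<subseteq> S) \<Longrightarrow> v \<in> S \<Longrightarrow> foldr L is v \<in> S"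
  by (induction "is") auto

lemma sum_apply: "sum g I x = (\<Sum>i\<in>I. g i x)"
  by (induction I rule: infinite_finite_induct) auto

lemma (in vector_space) linear_image_span_subset:
  assumes "Vector_Spaces.linear scale scale L" and "L ` S \<subseteq> span T"
  shows "L ` span S \<subseteq> span T"
proof -
  interpret L: Vector_Spaces.linear scale scale L by fact
  have "L ` span S = span (L ` S)"
    by (simp add: L.span_image)
  also have "\<dots> \<subseteq> span T"
    using assms(2) by (simp add: span_minimal)
  finally show ?thesis .
qed

locale independent_list = vector_space scale
  for scale :: "'a::field \<Rightarrow> 'b::ab_group_add \<Rightarrow> 'b" (infixr \<open>*s\<close> 75) +
  fixes bs :: "'b list"
  assumes distinct_bs: "distinct bs" and independent_bs: "independent (set bs)"
begin

definition coord_vec :: "'b \<Rightarrow> 'a vec" where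
  "coord_vec v = vec (length bs) (\<lambda>i. representation (set bs) v (bs ! i))"

definition mat_of_map :: "('b \<Rightarrow> 'b) \<Rightarrow> 'a mat" where
  "mat_of_map L = mat (length bs) (length bs) (\<lambda>(i, j). representation (set bs) (L (bs ! j)) (bs ! i))"

lemma coord_vec_carrier [simp]: "coord_vec v \<in> carrier_vec (length bs)"
  by (simp add: coord_vec_def)

lemma mat_of_map_carrier [simp]: "mat_of_map L \<in> carrier_mat (length bs) (length bs)"
  by (simp add: mat_of_map_def)

lemma col_mat_of_map: "j < length bs \<Longrightarrow> col (mat_of_map L) j = coord_vec (L (bs ! j))"
  by (simp add: mat_of_map_def coord_vec_def)

lemma sum_coord_vec:
  assumes "v \<in> span (set bs)"
  shows "(\<Sum>i<length bs. coord_vec v $ i *s bs ! i) = v"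
proof -
  have "(\<Sum>i<length bs. coord_vec v $ i *s bs ! i) = (\<Sum>b\<in>set bs. representation (set bs) v b *s b)"
    by (simp add: coord_vec_def sum_list_distinct_conv_sum_set[OF distinct_bs, symmetric]
        sum_list_sum_nth atLeast0LessThan)
  also have "\<dots> = v"
    using sum_representation_eq[OF independent_bs assms] by simp
  finally show ?thesis .
qed

lemma map_nth_in_span:
  "L ` span (set bs) \<subseteq> span (set bs) \<Longrightarrow> j < length bs \<Longrightarrow> L (bs ! j) \<in> span (set bs)"
  by (meson image_subset_iff nth_mem span_base)

lemma representation_sum_scale:
  assumes "\<And>k. k \<in> K \<Longrightarrow> w k \<in> span (set bs)"
  shows "representation (set bs) (\<Sum>k\<in>K. c k *s w k) b = (\<Sum>k\<in>K. c k * representation (set bs) (w k) b)"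
  using assms by (simp add: representation_sum representation_scale independent_bs span_scale)

lemma mat_of_map_mult_coord_vec:
  assumes "Vector_Spaces.linear scale scale L" and "L ` span (set bs) \<subseteq> span (set bs)"
    and "v \<in> span (set bs)"
  shows "mat_of_map L *\<^sub>v coord_vec v = coord_vec (L v)"
proof -
  interpret L: Vector_Spaces.linear scale scale L by fact
  have Lv: "L v = (\<Sum>j<length bs. coord_vec v $ j *s L (bs ! j))"
    by (subst sum_coord_vec[OF assms(3), symmetric]) (simp add: L.sum L.scale)
  show ?thesis
  proof (rule eq_vecI)
    fix i assume "i < dim_vec (coord_vec (L v))"
    then have i: "i < length bs" by (simp add: coord_vec_def)
    have "coord_vec (L v) $ i = representation (set bs) (L v) (bs ! i)"
      using i by (simp add: coord_vec_def)
    also have "\<dots> = (\<Sum>j<length bs. coord_vec v $ j * representation (set bs) (L (bs ! j)) (bs ! i))"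
      unfolding Lv using assms(2) by (intro representation_sum_scale map_nth_in_span) auto
    also have "\<dots> = (mat_of_map L *\<^sub>v coord_vec v) $ i"
      using i by (simp add: mat_of_map_def scalar_prod_def coord_vec_def mult.commute atLeast0LessThan)
    finally show "(mat_of_map L *\<^sub>v coord_vec v) $ i = coord_vec (L v) $ i" ..
  qed (simp add: mat_of_map_def coord_vec_def)
qed

lemma mat_of_map_mult:
  assumes "Vector_Spaces.linear scale scale L1" and "L1 ` span (set bs) \<subseteq> span (set bs)"
    and "L2 ` span (set bs) \<subseteq> span (set bs)"
  shows "mat_of_map L1 * mat_of_map L2 = mat_of_map (L1 \<circ> L2)"
proof (rule eq_matI)
  fix i j assume "i < dim_row (mat_of_map (L1 \<circ> L2))" and "j < dim_col (mat_of_map (L1 \<circ> L2))"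
  then have i: "i < length bs" and j: "j < length bs" by (simp_all add: mat_of_map_def)
  have "(mat_of_map L1 * mat_of_map L2) $$ (i, j) = (mat_of_map L1 *\<^sub>v col (mat_of_map L2) j) $ i"
    using i j by (simp add: mat_of_map_def)
  also have "\<dots> = coord_vec (L1 (L2 (bs ! j))) $ i"
    using j assms by (simp add: col_mat_of_map mat_of_map_mult_coord_vec map_nth_in_span)
  also have "\<dots> = mat_of_map (L1 \<circ> L2) $$ (i, j)"
    using i j by (simp add: mat_of_map_def coord_vec_def)
  finally show "(mat_of_map L1 * mat_of_map L2) $$ (i, j) = mat_of_map (L1 \<circ> L2) $$ (i, j)" .
qed (simp_all add: mat_of_map_def)

lemma mat_of_map_sum_scale:
  assumes "\<And>k. k \<in> K \<Longrightarrow> L k ` span (set bs) \<subseteq> span (set bs)"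
  shows "mat_of_map (\<lambda>v. \<Sum>k\<in>K. c k *s L k v)
    = mat (length bs) (length bs) (\<lambda>(i, j). \<Sum>k\<in>K. mat_of_map (L k) $$ (i, j) * c k)"
    (is "_ = ?M")
proof (rule eq_matI)
  fix i j assume "i < dim_row ?M" and "j < dim_col ?M"
  then have i: "i < length bs" and j: "j < length bs" by simp_all
  have "representation (set bs) (\<Sum>k\<in>K. c k *s L k (bs ! j)) (bs ! i)
      = (\<Sum>k\<in>K. c k * representation (set bs) (L k (bs ! j)) (bs ! i))"
    using assms j by (intro representation_sum_scale map_nth_in_span)
  then show "mat_of_map (\<lambda>v. \<Sum>k\<in>K. c k *s L k v) $$ (i, j) = ?M $$ (i, j)"
    using i j by (simp add: mat_of_map_def mult.commute)
qed (simp_all add: mat_of_map_def)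

lemma foldr_mat_of_map_mult_coord_vec:
  assumes "\<And>i. i \<in> set is \<Longrightarrow> Vector_Spaces.linear scale scale (L i)"
    and "\<And>i. i \<in> set is \<Longrightarrow> L i ` span (set bs) \<subseteq> span (set bs)"
    and "v \<in> span (set bs)"
  shows "foldr (*) (map (\<lambda>i. mat_of_map (L i)) is) (1\<^sub>m (length bs)) *\<^sub>v coord_vec v
    = coord_vec (foldr L is v)"
  using assms
proof (induction "is")
  case Nil
  then show ?case by simp
next
  case (Cons i "is")
  let ?M = "foldr (*) (map (\<lambda>i. mat_of_map (L i)) is) (1\<^sub>m (length bs))"
  have "?M \<in> carrier_mat (length bs) (length bs)"
    by (induction "is") (auto intro: mult_carrier_mat[OF mat_of_map_carrier])
  then have "(mat_of_map (L i) * ?M) *\<^sub>v coord_vec v = mat_of_map (L i) *\<^sub>v (?M *\<^sub>v coord_vec v)"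
    by (rule assoc_mult_mat_vec[OF mat_of_map_carrier _ coord_vec_carrier])
  moreover have "foldr L is v \<in> span (set bs)"
    using Cons.prems(2,3) by (intro foldr_closed) auto
  ultimately show ?case
    using Cons by (simp add: mat_of_map_mult_coord_vec)
qed

lemma scalar_prod_coord_vec:
  assumes "Vector_Spaces.linear scale (*) \<phi>" and "v \<in> span (set bs)"
  shows "vec (length bs) (\<lambda>i. \<phi> (bs ! i)) \<bullet> coord_vec v = \<phi> v"
proof -
  interpret \<phi>: Vector_Spaces.linear scale "(*)" \<phi> by fact
  have "\<phi> v = (\<Sum>i<length bs. coord_vec v $ i * \<phi> (bs ! i))"
    by (subst sum_coord_vec[OF assms(2), symmetric]) (simp add: \<phi>.sum \<phi>.scale)
  then show ?thesis
    by (simp add: scalar_prod_def coord_vec_def atLeast0LessThan mult.commute)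
qed

end

interpretation cpoly: vector_space poly_scale
  by unfold_locales (auto simp: poly_scale_def fun_eq_iff algebra_simps)

lemma linear_coeff: "Vector_Spaces.linear poly_scale (*) (\<lambda>g :: cpoly. g m)"
proof -
  have "vector_space ((*) :: complex \<Rightarrow> complex \<Rightarrow> complex)"
    by unfold_locales (simp_all add: algebra_simps)
  then show ?thesis
    by (simp add: Vector_Spaces.linear_iff cpoly.vector_space_axioms poly_scale_def)
qed

(* (1/k!) d^k/dx_j^k on coefficient functions *)
definition hasse_deriv :: "nat \<Rightarrow> nat \<Rightarrow> cpoly \<Rightarrow> cpoly" where
  "hasse_deriv j k g = (\<lambda>m. of_nat (m j + k choose k) * g (m(j := m j + k)))"

(* g(x + t e_j), provided g has degree at most d in x_j; the sum is truncated at d. *)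
definition taylor_shift :: "nat \<Rightarrow> nat \<Rightarrow> complex \<Rightarrow> cpoly \<Rightarrow> cpoly" where
  "taylor_shift d j t g = (\<Sum>k\<le>d. poly_scale (t ^ k) (hasse_deriv j k g))"

definition pderivs :: "nat \<Rightarrow> cpoly \<Rightarrow> cpoly set" where
  "pderivs n f = {pderiv_mono n e f | e. \<forall>i\<ge>n. e i = 0}"

lemma linear_hasse_deriv: "Vector_Spaces.linear poly_scale poly_scale (hasse_deriv j k)"
  by (auto simp: Vector_Spaces.linear_iff cpoly.vector_space_axioms hasse_deriv_def poly_scale_def
      fun_eq_iff algebra_simps)

lemma linear_taylor_shift: "Vector_Spaces.linear poly_scale poly_scale (taylor_shift d j t)"
proof -
  interpret H: Vector_Spaces.linear poly_scale poly_scale "hasse_deriv j k" for k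
    by (rule linear_hasse_deriv)
  show ?thesis
    by (auto simp: Vector_Spaces.linear_iff cpoly.vector_space_axioms taylor_shift_def H.add H.scale
        sum.distrib cpoly.scale_right_distrib cpoly.scale_sum_right mult.commute)
qed

lemma hasse_deriv_commute:
  "hasse_deriv j1 k1 \<circ> hasse_deriv j2 k2 = hasse_deriv j2 k2 \<circ> hasse_deriv j1 k1"
proof (cases "j1 = j2")
  case True
  have "hasse_deriv j1 k1 (hasse_deriv j1 k2 g) m = hasse_deriv j1 k2 (hasse_deriv j1 k1 g) m" for g m
  proof -
    let ?a = "m j1"
    have "hasse_deriv j1 k1 (hasse_deriv j1 k2 g) m
        = of_nat (?a + k1 choose k1) * of_nat (?a + k1 + k2 choose k2) * g (m(j1 := ?a + k1 + k2))"
      by (simp add: hasse_deriv_def add_ac)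
    also have "\<dots> = of_nat (?a + k2 choose k2) * of_nat (?a + k2 + k1 choose k1) * g (m(j1 := ?a + k2 + k1))"
      by (simp add: binomial_fact field_simps add_ac)
    also have "\<dots> = hasse_deriv j1 k2 (hasse_deriv j1 k1 g) m"
      by (simp add: hasse_deriv_def add_ac)
    finally show ?thesis .
  qed
  then show ?thesis
    unfolding True by (auto simp: fun_eq_iff)
next
  case False
  then show ?thesis
    by (auto simp: hasse_deriv_def fun_eq_iff fun_upd_twist mult_ac)
qed

lemma hasse_deriv_pderiv_mono:
  assumes "j < n"
  shows "hasse_deriv j k (pderiv_mono n e f) = poly_scale (1 / fact k) (pderiv_mono n (e(j := e j + k)) f)"
proof
  fix m
  let ?m' = "m(j := m j + k)" and ?e' = "e(j := e j + k)"
  let ?P = "\<Prod>i\<in>{..<n} - {j}. (of_nat (fact (m i + e i)) / of_nat (fact (m i)) :: complex)"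
  have shift: "(\<lambda>i. ?m' i + e i) = (\<lambda>i. m i + ?e' i)"
    by (auto simp: fun_eq_iff)
  have "(\<Prod>i<n. of_nat (fact (?m' i + e i)) / of_nat (fact (?m' i)) :: complex)
      = fact (m j + k + e j) / fact (m j + k) * ?P"
    using assms by (subst prod.remove[of _ j]) (auto intro!: prod.cong)
  moreover have "(\<Prod>i<n. of_nat (fact (m i + ?e' i)) / of_nat (fact (m i)) :: complex)
      = fact (m j + (e j + k)) / fact (m j) * ?P"
    using assms by (subst prod.remove[of _ j]) (auto intro!: prod.cong)
  moreover have "(of_nat (m j + k choose k) :: complex) * (fact (m j + k + e j) / fact (m j + k))
      = 1 / fact k * (fact (m j + (e j + k)) / fact (m j))"
    by (simp add: binomial_fact field_simps add_ac)
  ultimately show "hasse_deriv j k (pderiv_mono n e f) m = poly_scale (1 / fact k) (pderiv_mono n ?e' f) m"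
    unfolding hasse_deriv_def pderiv_mono_def poly_scale_def shift by (simp only: mult.assoc[symmetric])
qed

lemma hasse_deriv_span_pderivs:
  assumes "j < n"
  shows "hasse_deriv j k ` cpoly.span (pderivs n f) \<subseteq> cpoly.span (pderivs n f)"
proof (rule cpoly.linear_image_span_subset[OF linear_hasse_deriv])
  show "hasse_deriv j k ` pderivs n f \<subseteq> cpoly.span (pderivs n f)"
  proof safe
    fix g assume "g \<in> pderivs n f"
    then obtain e where "\<forall>i\<ge>n. e i = 0" and g: "g = pderiv_mono n e f"
      by (auto simp: pderivs_def)
    then have "pderiv_mono n (e(j := e j + k)) f \<in> pderivs n f"
      using assms by (auto simp: pderivs_def)
    then show "hasse_deriv j k g \<in> cpoly.span (pderivs n f)"
      unfolding g hasse_deriv_pderiv_mono[OF assms] by (intro cpoly.span_scale cpoly.span_base)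
  qed
qed

lemma taylor_shift_span_pderivs:
  assumes "j < n"
  shows "taylor_shift d j t ` cpoly.span (pderivs n f) \<subseteq> cpoly.span (pderivs n f)"
  using hasse_deriv_span_pderivs[OF assms]
  by (auto simp: taylor_shift_def intro!: cpoly.span_sum cpoly.span_scale)

lemma self_in_pderivs: "f \<in> pderivs n f"
proof -
  have "pderiv_mono n (\<lambda>_. 0) f = f"
    by (simp add: pderiv_mono_def)
  then show ?thesis
    unfolding pderivs_def by force
qed

lemma is_poly_exponent_bound:
  assumes "is_poly n f"
  obtains d where "\<And>e i. f e \<noteq> 0 \<Longrightarrow> e i \<le> d"
proof
  fix e i assume e: "f e \<noteq> 0"
  have finite: "finite {e. f e \<noteq> 0}"
    using assms by (simp add: is_poly_def)
  show "e i \<le> (\<Sum>e\<in>{e. f e \<noteq> 0}. \<Sum>i<n. e i)"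
  proof (cases "i < n")
    case True
    have "e i \<le> (\<Sum>i<n. e i)"
      using True by (intro member_le_sum) auto
    also have "\<dots> \<le> (\<Sum>e\<in>{e. f e \<noteq> 0}. \<Sum>i<n. e i)"
      using e finite by (intro member_le_sum) auto
    finally show ?thesis .
  qed (use assms e in \<open>auto simp: is_poly_def\<close>)
qed

lemma finite_pderivs:
  assumes "is_poly n f"
  shows "finite (pderivs n f)"
proof -
  obtain d where d: "\<And>e i. f e \<noteq> 0 \<Longrightarrow> e i \<le> d"
    using is_poly_exponent_bound[OF assms] by blast
  let ?E = "{e. \<forall>i. (i \<in> {..<n} \<longrightarrow> e i \<in> {..d}) \<and> (i \<notin> {..<n} \<longrightarrow> e i = 0)}"
  have "pderivs n f \<subseteq> insert 0 ((\<lambda>e. pderiv_mono n e f) ` ?E)"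
  proof
    fix g assume "g \<in> pderivs n f"
    then obtain e where e: "\<forall>i\<ge>n. e i = 0" and g: "g = pderiv_mono n e f"
      by (auto simp: pderivs_def)
    show "g \<in> insert 0 ((\<lambda>e. pderiv_mono n e f) ` ?E)"
    proof (cases "g = 0")
      case False
      then obtain m where "f (\<lambda>i. m i + e i) \<noteq> 0"
        by (auto simp: g pderiv_mono_def fun_eq_iff)
      then have "e i \<le> d" for i
        using d[of "\<lambda>i. m i + e i" i] by simp
      then show ?thesis
        using e g by auto
    qed simp
  qed
  moreover have "finite ?E"
    by (rule finite_set_of_finite_funs) simp_all
  ultimately show ?thesis
    by (meson finite_imageI finite_insert finite_subset)
qed

lemma taylor_shift_apply_zero:
  assumes "m j = 0"
  shows "taylor_shift d j t g m = (\<Sum>k\<le>d. t ^ k * g (m(j := k)))"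
  using assms by (simp add: taylor_shift_def hasse_deriv_def poly_scale_def sum_apply)

lemma foldr_taylor_shift_apply:
  assumes poly: "is_poly n f" and deg: "\<And>e i. f e \<noteq> 0 \<Longrightarrow> e i \<le> d"
    and "j \<le> n" and "\<forall>i\<ge>j. m i = 0"
  shows "foldr (\<lambda>i. taylor_shift d i (x i)) [j..<n] f m
    = (\<Sum>e | f e \<noteq> 0 \<and> (\<forall>i<j. e i = m i). f e * (\<Prod>i=j..<n. x i ^ e i))"
  using assms(3,4)
proof (induction j arbitrary: m rule: inc_induct)
  case base
  have "e = m" if "f e \<noteq> 0" and "\<forall>i<n. e i = m i" for e
  proof
    fix i show "e i = m i"
      using that base poly by (cases "i < n") (auto simp: is_poly_def)
  qed
  then have "{e. f e \<noteq> 0 \<and> (\<forall>i<n. e i = m i)} = (if f m = 0 then {} else {m})"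
    by auto
  then show ?case
    by simp
next
  case (step j)
  let ?A = "{e. f e \<noteq> 0 \<and> (\<forall>i<j. e i = m i)}"
  let ?P = "\<lambda>e. \<Prod>i=Suc j..<n. x i ^ e i"
  have finite: "finite ?A"
    using poly by (auto simp: is_poly_def elim: rev_finite_subset)
  have slice: "{e. f e \<noteq> 0 \<and> (\<forall>i<Suc j. e i = (m(j := k)) i)} = {e \<in> ?A. e j = k}" for k
    by (auto simp: less_Suc_eq)
  have IH: "foldr (\<lambda>i. taylor_shift d i (x i)) [Suc j..<n] f (m(j := k))
      = (\<Sum>e\<in>{e \<in> ?A. e j = k}. f e * ?P e)" for k
  proof -
    have "\<forall>i\<ge>Suc j. (m(j := k)) i = 0"
      using step.prems by simp
    from step.IH[OF this] show ?thesis
      by (simp only: slice)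
  qed
  have "foldr (\<lambda>i. taylor_shift d i (x i)) [j..<n] f m
      = (\<Sum>k\<le>d. x j ^ k * foldr (\<lambda>i. taylor_shift d i (x i)) [Suc j..<n] f (m(j := k)))"
    using step.hyps(2) step.prems by (simp add: upt_conv_Cons taylor_shift_apply_zero)
  also have "\<dots> = (\<Sum>k\<le>d. \<Sum>e\<in>{e \<in> ?A. e j = k}. f e * (x j ^ e j * ?P e))"
    by (simp add: IH sum_distrib_left mult_ac)
  also have "\<dots> = (\<Sum>e\<in>?A. f e * (x j ^ e j * ?P e))"
    using deg by (intro sum.group finite) auto
  also have "\<dots> = (\<Sum>e\<in>?A. f e * (\<Prod>i=j..<n. x i ^ e i))"
    using step.hyps(2) by (simp add: prod.atLeast_Suc_lessThan)
  finally show ?case .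
qed

corollary foldr_taylor_shift_eval:
  assumes "is_poly n f" and "\<And>e i. f e \<noteq> 0 \<Longrightarrow> e i \<le> d"
  shows "foldr (\<lambda>i. taylor_shift d i (x i)) [0..<n] f (\<lambda>_. 0) = poly_eval n f x"
  using foldr_taylor_shift_apply[where j = 0 and m = "\<lambda>_. 0" and x = x] assms
  by (simp add: poly_eval_def atLeast0LessThan)

lemma comm_roabp_computes_basis:
  assumes poly: "is_poly n f" and deg: "\<And>e i. f e \<noteq> 0 \<Longrightarrow> e i \<le> d"
    and basis: "independent_list poly_scale bs"
    and span: "cpoly.span (set bs) = cpoly.span (pderivs n f)"
  shows "comm_roabp_computes n (length bs) f"
proof -
  interpret B: independent_list poly_scale bs by fact
  define A where "A j k = B.mat_of_map (hasse_deriv j k)" for j k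
  define u where "u = vec (length bs) (\<lambda>i. (bs ! i) (\<lambda>_. 0))"
  have invariant_hasse: "hasse_deriv j k ` cpoly.span (set bs) \<subseteq> cpoly.span (set bs)" if "j < n" for j k
    unfolding span using hasse_deriv_span_pderivs[OF that] .
  have invariant_shift: "taylor_shift d j t ` cpoly.span (set bs) \<subseteq> cpoly.span (set bs)" if "j < n" for j t
    unfolding span using taylor_shift_span_pderivs[OF that] .
  have matrix: "roabp_matrix (length bs) d A j t = B.mat_of_map (taylor_shift d j t)" if "j < n" for j t
    using B.mat_of_map_sum_scale[of "{..d}" "hasse_deriv j" "\<lambda>k. t ^ k"] invariant_hasse[OF that]
    by (simp add: roabp_matrix_def A_def taylor_shift_def[abs_def])
  have commute: "A j1 k1 * A j2 k2 = A j2 k2 * A j1 k1" if "j1 < n" and "j2 < n" for j1 k1 j2 k2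
    using that by (simp add: A_def B.mat_of_map_mult linear_hasse_deriv invariant_hasse hasse_deriv_commute)
  have eval: "roabp_eval n (length bs) d id A u (B.coord_vec f) x = poly_eval n f x" for x
  proof -
    let ?g = "foldr (\<lambda>i. taylor_shift d i (x i)) [0..<n] f"
    have f: "f \<in> cpoly.span (set bs)"
      unfolding span by (intro cpoly.span_base self_in_pderivs)
    have maps: "map (\<lambda>i. roabp_matrix (length bs) d A i (x i)) [0..<n]
        = map (\<lambda>i. B.mat_of_map (taylor_shift d i (x i))) [0..<n]"
      using matrix by simp
    have "roabp_eval n (length bs) d id A u (B.coord_vec f) x = u \<bullet> B.coord_vec ?g"
      unfolding roabp_eval_def id_apply maps using f
      by (subst B.foldr_mat_of_map_mult_coord_vec[where L = "\<lambda>i. taylor_shift d i (x i)"])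
        (auto simp: linear_taylor_shift invariant_shift)
    also have "\<dots> = ?g (\<lambda>_. 0)"
      unfolding u_def using f invariant_shift
      by (intro B.scalar_prod_coord_vec linear_coeff foldr_closed) auto
    also have "\<dots> = poly_eval n f x"
      using poly deg by (rule foldr_taylor_shift_eval)
    finally show ?thesis .
  qed
  have "A j k \<in> carrier_mat (length bs) (length bs)" for j k
    by (simp add: A_def)
  moreover have "u \<in> carrier_vec (length bs)"
    by (simp add: u_def)
  ultimately show ?thesis
    unfolding comm_roabp_computes_def using bij_betw_id commute eval B.coord_vec_carrier by blast
qed

lemma comm_roabp_computes_DPD:
  assumes "is_poly n f"
  shows "comm_roabp_computes n (DPD n f) f"
proof -
  obtain d where deg: "\<And>e i. f e \<noteq> 0 \<Longrightarrow> e i \<le> d"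
    using is_poly_exponent_bound[OF assms] by blast
  obtain B where B: "B \<subseteq> pderivs n f" "cpoly.independent B" "pderivs n f \<subseteq> cpoly.span B"
    and card: "card B = cpoly.dim (pderivs n f)"
    by (rule cpoly.basis_exists)
  have "finite B"
    using B(1) finite_pderivs[OF assms] by (rule finite_subset)
  then obtain bs where bs: "distinct bs" "set bs = B"
    using finite_distinct_list by blast
  have "independent_list poly_scale bs"
    by unfold_locales (use bs B(2) in simp_all)
  moreover have "cpoly.span (set bs) = cpoly.span (pderivs n f)"
    using B bs(2) cpoly.span_superset[of "pderivs n f"] by (auto simp: cpoly.span_eq)
  moreover have "length bs = DPD n f"
    using card bs distinct_card[OF bs(1)] by (simp add: DPD_def pderivs_def)
  ultimately show ?thesis
    using comm_roabp_computes_basis[OF assms, of d] deg by metis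
qed

theorem theorem1p4:
  fixes n :: nat and f :: cpoly
  assumes "is_poly n f" and "homogeneous n f"
  shows "commRO n f \<le> DPD n f"
proof -
  have "comm_roabp_computes n (DPD n f) f"
    using assms(1) by (rule comm_roabp_computes_DPD)
  then show ?thesis
    unfolding commRO_def by (rule Least_le)
qed

end
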